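(* In the setting described in the context, let $\mu$ be the probability distribution on $\overline{\mathbb{R}}$ of the almost surely defined limit $\zeta=\lim_{m\to\infty}z_m$. Then $$\mu=\tfrac13\big((\tau_1)_*\mu+(\tau_2)_*\mu+(\tau_3)_*\mu\big),$$ where $(\tau_i)_*\mu$ is the pushforward of $\mu$ under $\tau_i|_{\overline{\mathbb{R}}}\colon\overline{\mathbb{R}}\to\overline{\mathbb{R}}$.
   Context: Let $\mathbb{H}=\{z\in\mathbb{C}:\operatorname{Im}z>0\}$ be the Poincaré upper half-plane (metric $(dx^2+dy^2)/y^2$), $\overline{\mathbb{R}}=\mathbb{R}\cup\{\infty\}$, and $\overline{\mathbb{H}}=\mathbb{H}\cup\overline{\mathbb{R}}$ (a closed disk). A (hyperbolic) line is a set $\{z\in\mathbb{H}:\operatorname{Re}z=x\}$ or $\{z\in\mathbb{H}:|z-x|=r\}$ with $x\in\mathbb{R}$, $r>0$; its reflection $t_L$ is $t_L(z)=2x-\bar z$, resp. $t_L(z)=r^2/(\bar z-x)+x$, extended continuously to $\overline{\mathbb{H}}$. Fix lines $L_1,L_2,L_3\subseteq\mathbb{H}$ and $z_0\in\mathbb{H}$ such that for all distinct $i,i'\in\{1,2,3\}$ either (a) $L_i\cap L_{i'}=\emptyset$ and $z_0$ lies in the connected component of $\mathbb{H}\setminus(L_i\cup L_{i'})$ whose boundary contains both lines, or (b) $L_i,L_{i'}$ meet at an angle of measure $\pi/m(i,i')$ with $m(i,i')\ge2$ an integer, and $z_0$ lies in the interior of that angle. Let $s_i=t_{L_i}$, let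 $W$ be the group generated by $S=\{s_1,s_2,s_3\}$, and let $\ell$ be the word length with respect to $S$. The one-way reflection $\tau_i\colon\overline{\mathbb{H}}\to\overline{\mathbb{H}}$ is $\tau_i(z)=s_i(z)$ if $z$ and $z_0$ are on the same side of $L_i$ and $\tau_i(z)=z$ otherwise; it is continuous. Let $i_1,i_2,\ldots$ be independent uniform random elements of $\{1,2,3\}$ and $z_m=(\tau_{i_1}\circ\cdots\circ\tau_{i_m})(z_0)$ (equivalently $z_m=u_m(z_0)$ where $u_0=1$, $u_{m+1}=u_ms_{i_{m+1}}$ if $\ell(u_ms_{i_{m+1}})>\ell(u_m)$ and $u_{m+1}=u_m$ otherwise). It is known that $z_m$ converges almost surely to a limit $\zeta\in\overline{\mathbb{R}}$. *)

theory Defs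
  imports "HOL-Probability.Probability"
begin

text \<open>Points of the closed disk Hbar = H \<union> R \<union> {\<infinity>} are represented as
  values of type complex option: Some z (with Im z \<ge> 0) is the finite point z,
  None is the point \<infinity>.\<close>

definition Hbar :: "complex option set" where
  "Hbar = insert None (Some ` {z. Im z \<ge> 0})"

definition Rbar :: "complex option set" where
  "Rbar = insert None (Some ` {z. Im z = 0})"

definition Rbar_M :: "complex option measure" where
  "Rbar_M = sigma Rbar (insert {None} ((\<lambda>B. Some ` B) ` {B \<in> sets borel. B \<subseteq> {z. Im z = 0}}))"

datatype hline = VLine real | Circ real real

definition valid_line :: "hline \<Rightarrow> bool" where
  "valid_line L = (case L of VLine x \<Rightarrow> True | Circ x r \<Rightarrow> r > 0)"

definition line_set :: "hline \<Rightarrow> complex set" where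
  "line_set L = (case L of
      VLine x \<Rightarrow> {z. Im z > 0 \<and> Re z = x}
    | Circ x r \<Rightarrow> {z. Im z > 0 \<and> cmod (z - of_real x) = r})"

text \<open>The reflection t_L, extended continuously to Hbar.\<close>
definition refl :: "hline \<Rightarrow> complex option \<Rightarrow> complex option" where
  "refl L w = (case L of
      VLine x \<Rightarrow> (case w of None \<Rightarrow> None | Some z \<Rightarrow> Some (2 * of_real x - cnj z))
    | Circ x r \<Rightarrow> (case w of None \<Rightarrow> Some (of_real x)
                   | Some z \<Rightarrow> if z = of_real x then None
                               else Some (of_real (r\<^sup>2) / (cnj z - of_real x) + of_real x)))"

text \<open>A signed quantity whose sign tells on which side of L a point of Hbar lies
  (zero exactly on the closure of L in Hbar).\<close>
definition side :: "hline \<Rightarrow> complex option \<Rightarrow> real" where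
  "side L w = (case L of
      VLine x \<Rightarrow> (case w of None \<Rightarrow> 0 | Some z \<Rightarrow> Re z - x)
    | Circ x r \<Rightarrow> (case w of None \<Rightarrow> 1 | Some z \<Rightarrow> cmod (z - of_real x) - r))"

definition same_side :: "hline \<Rightarrow> complex option \<Rightarrow> complex option \<Rightarrow> bool" where
  "same_side L w w' \<longleftrightarrow> side L w * side L w' > 0"

definition tau :: "hline \<Rightarrow> complex \<Rightarrow> complex option \<Rightarrow> complex option" where
  "tau L z0 w = (if same_side L w (Some z0) then refl L w else w)"

text \<open>Unit normal of L at a point p of L, pointing to the side where side L > 0.\<close>
definition normal :: "hline \<Rightarrow> complex \<Rightarrow> complex" where
  "normal L p = (case L of VLine x \<Rightarrow> 1 | Circ x r \<Rightarrow> (p - of_real x) / of_real r)"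

definition cond_a :: "hline \<Rightarrow> hline \<Rightarrow> complex \<Rightarrow> bool" where
  "cond_a L L' z0 \<longleftrightarrow> line_set L \<inter> line_set L' = {} \<and>
     z0 \<in> {z. Im z > 0} - (line_set L \<union> line_set L') \<and>
     (let C = connected_component_set ({z. Im z > 0} - (line_set L \<union> line_set L')) z0
      in line_set L \<subseteq> frontier C \<and> line_set L' \<subseteq> frontier C)"

text \<open>Condition (b): L and L' meet at a point p at an angle of measure pi/m (m \<ge> 2),
  and z0 lies in the interior of that angle, i.e. in the region (sector at p) cut out
  by L and L' containing z0, whose interior angle at p is pi/m.  The interior angle of
  the sector {e*side L > 0, e'*side L' > 0} at p equals pi minus the angle between the
  normals e*n and e'*n'.\<close>
definition cond_b :: "hline \<Rightarrow> hline \<Rightarrow> complex \<Rightarrow> bool" where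
  "cond_b L L' z0 \<longleftrightarrow> (\<exists>p m::nat. p \<in> line_set L \<inter> line_set L' \<and> m \<ge> 2 \<and>
     Im z0 > 0 \<and> side L (Some z0) \<noteq> 0 \<and> side L' (Some z0) \<noteq> 0 \<and>
     (let v = of_real (sgn (side L (Some z0))) * normal L p;
          v' = of_real (sgn (side L' (Some z0))) * normal L' p
      in Re (cnj v * v') = - cos (pi / real m)))"

definition hbar_tendsto :: "(nat \<Rightarrow> complex option) \<Rightarrow> complex option \<Rightarrow> bool" where
  "hbar_tendsto f l = (case l of
      Some a \<Rightarrow> (\<forall>\<^sub>F n in sequentially. f n \<noteq> None) \<and> ((\<lambda>n. the (f n)) \<longlonglongrightarrow> a)
    | None \<Rightarrow> (\<forall>B. \<forall>\<^sub>F n in sequentially. f n = None \<or> cmod (the (f n)) > B))"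

text \<open>z_m = (tau_{i_1} o ... o tau_{i_m})(z0), where i_{k+1} = I k \<omega>.\<close>
definition zseq :: "(nat \<Rightarrow> hline) \<Rightarrow> complex \<Rightarrow> (nat \<Rightarrow> 'a \<Rightarrow> nat) \<Rightarrow> 'a \<Rightarrow> nat \<Rightarrow> complex option" where
  "zseq Ls z0 I \<omega> m = foldr (\<lambda>k w. tau (Ls (I k \<omega>)) z0 w) [0..<m] (Some z0)"

end

theory Submission
  imports Defs
begin

text \<open>The walk tau_{i_2} o ... o tau_{i_{m+1}} (z_0) has the law of z_m and is independent of
  the uniform first index i_1, so E f(z_{m+1}) = 1/3 sum_i E f(tau_i(z_m)) for every f. For f
  bounded and continuous on the closed disk, the continuity of the tau_i there and dominated
  convergence turn this into int f d\<mu> = 1/3 sum_i int (f o tau_i) d\<mu>. Continuous bumps converging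
  to the indicators of compact intervals of the real axis carry the identity over to these
  intervals, Dynkin's pi-lambda theorem to all Borel subsets of the axis, and the point at
  infinity takes the remaining mass.\<close>

section \<open>Convergence and continuity on the closed disk\<close>

lemma hbar_tendsto_Some_iff:
  "hbar_tendsto w (Some a) \<longleftrightarrow>
     (\<forall>e>0. \<forall>\<^sub>F n in sequentially. \<exists>z. w n = Some z \<and> dist z a < e)"
proof
  assume "hbar_tendsto w (Some a)"
  then have finite: "\<forall>\<^sub>F n in sequentially. w n \<noteq> None" and lim: "(\<lambda>n. the (w n)) \<longlonglongrightarrow> a"
    by (auto simp: hbar_tendsto_def)
  show "\<forall>e>0. \<forall>\<^sub>F n in sequentially. \<exists>z. w n = Some z \<and> dist z a < e"
  proof (intro allI impI)
    fix e :: real assume "e > 0"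
    with lim have "\<forall>\<^sub>F n in sequentially. dist (the (w n)) a < e" by (simp add: tendsto_iff)
    with finite show "\<forall>\<^sub>F n in sequentially. \<exists>z. w n = Some z \<and> dist z a < e"
      by eventually_elim auto
  qed
next
  assume near: "\<forall>e>0. \<forall>\<^sub>F n in sequentially. \<exists>z. w n = Some z \<and> dist z a < e"
  have "\<forall>\<^sub>F n in sequentially. w n \<noteq> None"
    using near[rule_format, of 1] by (rule eventually_mono) auto
  moreover have "\<forall>\<^sub>F n in sequentially. dist (the (w n)) a < e" if "e > 0" for e
    using near[rule_format, OF that] by (rule eventually_mono) auto
  ultimately show "hbar_tendsto w (Some a)" by (simp add: hbar_tendsto_def tendsto_iff)
qed

lemma hbar_tendsto_None_iff:
  "hbar_tendsto w None \<longleftrightarrow> (\<forall>B. \<forall>\<^sub>F n in sequentially. \<forall>z. w n = Some z \<longrightarrow> B < dist z c)"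
proof
  assume lim: "hbar_tendsto w None"
  show "\<forall>B. \<forall>\<^sub>F n in sequentially. \<forall>z. w n = Some z \<longrightarrow> B < dist z c"
  proof
    fix B
    from lim have "\<forall>\<^sub>F n in sequentially. w n = None \<or> B + cmod c < cmod (the (w n))"
      by (simp add: hbar_tendsto_def)
    then show "\<forall>\<^sub>F n in sequentially. \<forall>z. w n = Some z \<longrightarrow> B < dist z c"
    proof (rule eventually_mono, intro allI impI)
      fix n z assume "w n = None \<or> B + cmod c < cmod (the (w n))" "w n = Some z"
      then show "B < dist z c" using norm_triangle_ineq2[of z c] by (simp add: dist_norm)
    qed
  qed
next
  assume far: "\<forall>B. \<forall>\<^sub>F n in sequentially. \<forall>z. w n = Some z \<longrightarrow> B < dist z c"
  have "\<forall>\<^sub>F n in sequentially. w n = None \<or> B < cmod (the (w n))" for B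
    using far[rule_format, of "B + cmod c"]
  proof (rule eventually_mono)
    fix n assume "\<forall>z. w n = Some z \<longrightarrow> B + cmod c < dist z c"
    then show "w n = None \<or> B < cmod (the (w n))"
      using norm_triangle_ineq4[of "the (w n)" c] by (cases "w n") (auto simp: dist_norm)
  qed
  then show "hbar_tendsto w None" by (simp add: hbar_tendsto_def)
qed

lemma hbar_tendsto_merge:
  assumes u: "hbar_tendsto u l" and w: "hbar_tendsto w l"
    and v: "\<forall>\<^sub>F n in sequentially. v n = u n \<or> v n = w n"
  shows "hbar_tendsto v l"
proof (cases l)
  case None
  have "\<forall>\<^sub>F n in sequentially. \<forall>z. v n = Some z \<longrightarrow> B < dist z 0" for B
  proof -
    from u w have "\<forall>\<^sub>F n in sequentially. \<forall>z. u n = Some z \<longrightarrow> B < dist z 0"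
      and "\<forall>\<^sub>F n in sequentially. \<forall>z. w n = Some z \<longrightarrow> B < dist z 0"
      unfolding None hbar_tendsto_None_iff[where c = 0] by blast+
    with v show ?thesis by eventually_elim metis
  qed
  then show ?thesis unfolding None hbar_tendsto_None_iff[where c = 0] by blast
next
  case (Some a)
  have "\<forall>\<^sub>F n in sequentially. \<exists>z. v n = Some z \<and> dist z a < e" if "e > 0" for e
  proof -
    from u w that have "\<forall>\<^sub>F n in sequentially. \<exists>z. u n = Some z \<and> dist z a < e"
      and "\<forall>\<^sub>F n in sequentially. \<exists>z. w n = Some z \<and> dist z a < e"
      unfolding Some hbar_tendsto_Some_iff by blast+
    with v show ?thesis by eventually_elim metis
  qed
  then show ?thesis unfolding Some hbar_tendsto_Some_iff by blast
qed

lemma hbar_tendsto_cong_eventually: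
  "hbar_tendsto w l \<Longrightarrow> \<forall>\<^sub>F n in sequentially. v n = w n \<Longrightarrow> hbar_tendsto v l"
  by (rule hbar_tendsto_merge) (auto elim: eventually_mono)

lemma hbar_tendsto_local_map:
  assumes h: "continuous (at a) h" and "d > 0"
    and T: "\<And>z. dist z a < d \<Longrightarrow> T (Some z) = Some (h z)"
    and w: "hbar_tendsto w (Some a)"
  shows "hbar_tendsto (\<lambda>n. T (w n)) (Some (h a))"
  unfolding hbar_tendsto_Some_iff
proof (intro allI impI)
  fix e :: real assume "e > 0"
  with h obtain d' where "d' > 0" and h_near: "\<And>z. dist z a < d' \<Longrightarrow> dist (h z) (h a) < e"
    unfolding continuous_at_eps_delta by blast
  have "min d d' > 0" using \<open>d > 0\<close> \<open>d' > 0\<close> by simp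
  with w have "\<forall>\<^sub>F n in sequentially. \<exists>z. w n = Some z \<and> dist z a < min d d'"
    unfolding hbar_tendsto_Some_iff by blast
  then show "\<forall>\<^sub>F n in sequentially. \<exists>z. T (w n) = Some z \<and> dist z (h a) < e"
    by (rule eventually_mono) (auto simp: T h_near)
qed

definition hbar_continuous :: "(complex option \<Rightarrow> complex option) \<Rightarrow> bool" where
  "hbar_continuous T \<longleftrightarrow> (\<forall>w l. hbar_tendsto w l \<longrightarrow> hbar_tendsto (\<lambda>n. T (w n)) (T l))"

lemma hbar_continuous_refl_VLine: "hbar_continuous (refl (VLine x))"
  unfolding hbar_continuous_def
proof (intro allI impI)
  fix w l assume w: "hbar_tendsto w l"
  define h where "h z = 2 * of_real x - cnj z" for z
  have refl: "refl (VLine x) v = map_option h v" for v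
    by (simp add: refl_def h_def split: option.splits)
  have dist_h: "dist (h z) (of_real x) = dist z (of_real x)" for z
  proof -
    have "h z - of_real x = cnj (of_real x - z)" by (simp add: h_def)
    then show ?thesis by (metis complex_mod_cnj dist_commute dist_norm)
  qed
  show "hbar_tendsto (\<lambda>n. refl (VLine x) (w n)) (refl (VLine x) l)"
  proof (cases l)
    case None
    have "\<forall>\<^sub>F n in sequentially. \<forall>z. map_option h (w n) = Some z \<longrightarrow> B < dist z (of_real x)" for B
      using w unfolding None hbar_tendsto_None_iff[where c = "of_real x"]
      by (auto simp: dist_h elim!: allE[of _ B] eventually_mono)
    then show ?thesis unfolding None refl option.map(1) hbar_tendsto_None_iff[where c = "of_real x"] by blast
  next
    case (Some a)
    have "continuous (at a) h" unfolding h_def by (intro continuous_intros)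
    with w Some show ?thesis unfolding refl
      using hbar_tendsto_local_map[of a h 1 "map_option h" w] by simp
  qed
qed

lemma dist_refl_Circ:
  fixes z :: complex
  assumes "z \<noteq> of_real x"
  shows "dist ((of_real r)\<^sup>2 / (cnj z - of_real x) + of_real x) (of_real x) = r\<^sup>2 / dist z (of_real x)"
proof -
  have "cmod (cnj z - of_real x) = cmod (z - of_real x)"
    by (metis complex_cnj_complex_of_real complex_cnj_diff complex_mod_cnj)
  then show ?thesis by (simp add: dist_norm norm_divide norm_power)
qed

lemma hbar_tendsto_refl_Circ_None:
  assumes "r > 0" and w: "hbar_tendsto w None"
  shows "hbar_tendsto (\<lambda>n. refl (Circ x r) (w n)) (Some (of_real x))"
  unfolding hbar_tendsto_Some_iff
proof (intro allI impI)
  fix e :: real assume "e > 0"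
  from w have "\<forall>\<^sub>F n in sequentially. \<forall>z. w n = Some z \<longrightarrow> r\<^sup>2 / e < dist z (of_real x)"
    unfolding hbar_tendsto_None_iff[where c = "of_real x"] by blast
  then show "\<forall>\<^sub>F n in sequentially. \<exists>u. refl (Circ x r) (w n) = Some u \<and> dist u (of_real x) < e"
  proof (rule eventually_mono)
    fix n assume far: "\<forall>z. w n = Some z \<longrightarrow> r\<^sup>2 / e < dist z (of_real x)"
    show "\<exists>u. refl (Circ x r) (w n) = Some u \<and> dist u (of_real x) < e"
    proof (cases "w n")
      case (Some z)
      with far have "r\<^sup>2 / e < dist z (of_real x)" by simp
      moreover have "0 < r\<^sup>2 / e" using \<open>r > 0\<close> \<open>e > 0\<close> by simp
      ultimately have "z \<noteq> of_real x" and "r\<^sup>2 / dist z (of_real x) < e"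
        using \<open>e > 0\<close> by (auto simp: divide_less_eq mult.commute)
      with Some show ?thesis by (simp add: refl_def dist_refl_Circ)
    qed (use \<open>e > 0\<close> in \<open>simp add: refl_def\<close>)
  qed
qed

lemma hbar_tendsto_refl_Circ_center:
  assumes "r > 0" and w: "hbar_tendsto w (Some (of_real x))"
  shows "hbar_tendsto (\<lambda>n. refl (Circ x r) (w n)) None"
  unfolding hbar_tendsto_None_iff[where c = "of_real x"]
proof
  fix B
  have "r\<^sup>2 / (\<bar>B\<bar> + 1) > 0" using \<open>r > 0\<close> by simp
  with w have "\<forall>\<^sub>F n in sequentially. \<exists>z. w n = Some z \<and> dist z (of_real x) < r\<^sup>2 / (\<bar>B\<bar> + 1)"
    unfolding hbar_tendsto_Some_iff by blast
  then show "\<forall>\<^sub>F n in sequentially. \<forall>u. refl (Circ x r) (w n) = Some u \<longrightarrow> B < dist u (of_real x)"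
  proof (rule eventually_mono, intro allI impI)
    fix n u assume "\<exists>z. w n = Some z \<and> dist z (of_real x) < r\<^sup>2 / (\<bar>B\<bar> + 1)"
      and u: "refl (Circ x r) (w n) = Some u"
    then obtain z where z: "w n = Some z" and near: "dist z (of_real x) < r\<^sup>2 / (\<bar>B\<bar> + 1)" by blast
    from u z have "z \<noteq> of_real x" by (auto simp: refl_def)
    then have "0 < dist z (of_real x)" by simp
    moreover have "0 < \<bar>B\<bar> + 1" by simp
    ultimately have "\<bar>B\<bar> + 1 < r\<^sup>2 / dist z (of_real x)"
      using near by (simp add: pos_less_divide_eq mult.commute)
    with u z \<open>z \<noteq> of_real x\<close> show "B < dist u (of_real x)"
      by (auto simp: refl_def dist_refl_Circ)
  qed
qed

lemma hbar_continuous_refl_Circ: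
  assumes "r > 0"
  shows "hbar_continuous (refl (Circ x r))"
  unfolding hbar_continuous_def
proof (intro allI impI)
  fix w l assume w: "hbar_tendsto w l"
  show "hbar_tendsto (\<lambda>n. refl (Circ x r) (w n)) (refl (Circ x r) l)"
  proof (cases l)
    case None
    with hbar_tendsto_refl_Circ_None[OF assms w[unfolded None]] show ?thesis
      by (simp add: refl_def)
  next
    case (Some a)
    show ?thesis
    proof (cases "a = of_real x")
      case True
      with hbar_tendsto_refl_Circ_center[OF assms] w Some show ?thesis by (simp add: refl_def)
    next
      case False
      define h where "h z = of_real (r\<^sup>2) / (cnj z - of_real x) + of_real x" for z
      have "continuous (at a) h" unfolding h_def
        using False by (intro continuous_intros) (auto simp: complex_eq_iff)
      moreover have "refl (Circ x r) (Some z) = Some (h z)" if "dist z a < dist a (of_real x)" for z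
        using that by (auto simp: refl_def h_def dist_commute)
      ultimately show ?thesis
        using hbar_tendsto_local_map[of a h "dist a (of_real x)"] w Some False
        by (simp add: refl_def h_def)
    qed
  qed
qed

lemma hbar_continuous_refl: "valid_line L \<Longrightarrow> hbar_continuous (refl L)"
  by (cases L) (auto simp: valid_line_def hbar_continuous_refl_VLine hbar_continuous_refl_Circ)

lemma refl_eq_self_if_side_eq_0:
  assumes "valid_line L" and "side L w = 0"
  shows "refl L w = w"
proof (cases L)
  case (VLine x)
  with assms(2) show ?thesis by (cases w) (auto simp: refl_def side_def complex_eq_iff)
next
  case (Circ x r)
  with assms have "r > 0" by (simp add: valid_line_def)
  from assms(2) Circ obtain z where w: "w = Some z" and z: "cmod (z - of_real x) = r"
    by (cases w) (auto simp: side_def)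
  with \<open>r > 0\<close> have "z \<noteq> of_real x" by auto
  have "(z - of_real x) * cnj (z - of_real x) = of_real (r\<^sup>2)"
    using complex_norm_square[of "z - of_real x"] z by simp
  moreover have "cnj (z - of_real x) \<noteq> 0" using \<open>z \<noteq> of_real x\<close>
    by (metis complex_cnj_zero_iff right_minus_eq)
  ultimately have "of_real (r\<^sup>2) / (cnj z - of_real x) = z - of_real x"
    by (simp add: field_simps)
  with w \<open>z \<noteq> of_real x\<close> Circ show ?thesis by (simp add: refl_def)
qed

lemma eventually_side_sign_eq:
  assumes w: "hbar_tendsto w l" and "side L l \<noteq> 0"
  shows "\<forall>\<^sub>F n in sequentially. (0 < side L (w n) * s) = (0 < side L l * s)"
proof (cases l)
  case None
  with assms(2) obtain x r where L: "L = Circ x r" by (cases L) (auto simp: side_def)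
  from w have "\<forall>\<^sub>F n in sequentially. \<forall>z. w n = Some z \<longrightarrow> r < dist z (of_real x)"
    unfolding None hbar_tendsto_None_iff[where c = "of_real x"] by blast
  then have "\<forall>\<^sub>F n in sequentially. 0 < side L (w n)"
    by (rule eventually_mono) (auto simp: L side_def dist_norm split: option.split)
  then show ?thesis by (rule eventually_mono) (simp add: None L side_def zero_less_mult_iff)
next
  case (Some a)
  define f where "f z = side L (Some z) * s" for z
  from w Some have finite: "\<forall>\<^sub>F n in sequentially. w n = Some (the (w n))"
    and "(\<lambda>n. the (w n)) \<longlonglongrightarrow> a" by (auto simp: hbar_tendsto_def elim: eventually_mono)
  moreover have "isCont f a" unfolding f_def side_def by (cases L) (auto intro!: continuous_intros)
  ultimately have lim: "(\<lambda>n. f (the (w n))) \<longlonglongrightarrow> f a" by (metis isCont_tendsto_compose)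
  have "\<forall>\<^sub>F n in sequentially. (0 < f (the (w n))) = (0 < f a)"
  proof (cases "f a" "0 :: real" rule: linorder_cases)
    case less
    from order_tendstoD(2)[OF lim less] show ?thesis by (rule eventually_mono) (use less in simp)
  next
    case equal
    with assms(2) Some have "s = 0" by (simp add: f_def)
    then show ?thesis by (simp add: f_def)
  next
    case greater
    from order_tendstoD(1)[OF lim greater] show ?thesis by (rule eventually_mono) (use greater in simp)
  qed
  with finite show ?thesis by eventually_elim (metis Some f_def)
qed

text \<open>On the closure of the line both branches of tau agree, since refl fixes it pointwise;
  off the closure the branch is eventually constant along a convergent sequence.\<close>
lemma hbar_continuous_tau:
  assumes L: "valid_line L"
  shows "hbar_continuous (tau L z0)"
  unfolding hbar_continuous_def
proof (intro allI impI)
  fix w l assume w: "hbar_tendsto w l"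
  define s where "s = side L (Some z0)"
  have tau: "tau L z0 v = (if 0 < side L v * s then refl L v else v)" for v
    by (simp add: tau_def same_side_def s_def)
  have refl_w: "hbar_tendsto (\<lambda>n. refl L (w n)) (refl L l)"
    using hbar_continuous_refl[OF L] w by (simp add: hbar_continuous_def)
  show "hbar_tendsto (\<lambda>n. tau L z0 (w n)) (tau L z0 l)"
  proof (cases "side L l = 0")
    case True
    then have "tau L z0 l = l" and "refl L l = l"
      by (simp_all add: tau refl_eq_self_if_side_eq_0[OF L])
    moreover have "\<forall>\<^sub>F n in sequentially. tau L z0 (w n) = refl L (w n) \<or> tau L z0 (w n) = w n"
      by (simp add: tau)
    ultimately show ?thesis using hbar_tendsto_merge[of "\<lambda>n. refl L (w n)" l w] refl_w w by simp
  next
    case False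
    note sign = eventually_side_sign_eq[OF w False, of s]
    show ?thesis
    proof (cases "0 < side L l * s")
      case True
      from sign have "\<forall>\<^sub>F n in sequentially. tau L z0 (w n) = refl L (w n)"
        by (rule eventually_mono) (use True in \<open>simp add: tau\<close>)
      with hbar_tendsto_cong_eventually[OF refl_w] True show ?thesis by (simp add: tau)
    next
      case False
      from sign have "\<forall>\<^sub>F n in sequentially. tau L z0 (w n) = w n"
        by (rule eventually_mono) (use False in \<open>simp add: tau\<close>)
      with hbar_tendsto_cong_eventually[OF w] False show ?thesis by (simp add: tau)
    qed
  qed
qed

section \<open>The Borel structure of the extended real axis\<close>

lemma borel_real_axis: "{z::complex. Im z = 0} \<in> sets borel"
  by measurable

lemma space_Rbar_M: "space Rbar_M = Rbar"
  unfolding Rbar_M_def by (rule space_measure_of) (auto simp: Rbar_def)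

lemma sets_Rbar_M_sigma_sets:
  "sets Rbar_M = sigma_sets Rbar (insert {None} (image Some ` {B \<in> sets borel. B \<subseteq> {z. Im z = 0}}))"
  unfolding Rbar_M_def by (rule sets_measure_of) (auto simp: Rbar_def)

lemma sets_Rbar_M_subset: "sets Rbar_M \<subseteq> {X. X \<subseteq> Rbar \<and> Some -` X \<in> sets borel}"
proof
  fix X assume "X \<in> sets Rbar_M"
  then show "X \<in> {X. X \<subseteq> Rbar \<and> Some -` X \<in> sets borel}"
    unfolding sets_Rbar_M_sigma_sets
  proof induct
    case (Basic X)
    then consider (infinity) "X = {None}"
      | (finite) B where "B \<in> sets borel" "B \<subseteq> {z. Im z = 0}" "X = Some ` B"
      by blast
    then show ?case
    proof cases
      case infinity
      then have "Some -` X = {}" by auto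
      with infinity show ?thesis by (simp add: Rbar_def)
    next
      case finite
      then have "Some -` X = B" by (simp add: inj_vimage_image_eq)
      moreover have "X \<subseteq> Rbar" using finite(2,3) by (auto simp: Rbar_def)
      ultimately show ?thesis using finite(1) by simp
    qed
  next
    case (Compl X)
    have "Some -` (Rbar - X) = {z. Im z = 0} - Some -` X" by (auto simp: Rbar_def)
    with Compl borel_real_axis show ?case by (simp add: sets.Diff)
  next
    case (Union X)
    have "range (\<lambda>i. Some -` X i) \<subseteq> sets borel" using Union(2) by blast
    then have "(\<Union>i. Some -` X i) \<in> sets borel" by (rule sets.countable_UN)
    moreover have "(\<Union>i. X i) \<subseteq> Rbar" using Union(2) by blast
    ultimately show ?case by (simp only: vimage_UN mem_Collect_eq)
  qed simp
qed

lemma sets_Rbar_M: "sets Rbar_M = {X. X \<subseteq> Rbar \<and> Some -` X \<in> sets borel}"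
proof (intro equalityI sets_Rbar_M_subset subsetI)
  fix X assume X: "X \<in> {X. X \<subseteq> Rbar \<and> Some -` X \<in> sets borel}"
  have "X = Some ` (Some -` X) \<union> (X \<inter> {None})"
  proof (rule set_eqI)
    fix w show "w \<in> X \<longleftrightarrow> w \<in> Some ` (Some -` X) \<union> (X \<inter> {None})" by (cases w) auto
  qed
  moreover have "Some -` X \<subseteq> {z. Im z = 0}" using X by (auto simp: Rbar_def)
  with X have "Some ` (Some -` X) \<in> sets Rbar_M"
    unfolding sets_Rbar_M_sigma_sets by (intro sigma_sets.Basic insertI2 imageI) auto
  moreover have "X \<inter> {None} \<in> sets Rbar_M"
  proof (cases "None \<in> X")
    case True
    then have "X \<inter> {None} = {None}" by auto
    then show ?thesis by (simp add: sets_Rbar_M_sigma_sets sigma_sets.Basic)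
  qed simp
  ultimately show "X \<in> sets Rbar_M" by (metis sets.Un)
qed

lemma Collect_Rbar_in_sets_Rbar_M:
  assumes "{z. Im z = 0 \<and> P (Some z)} \<in> sets borel"
  shows "{w \<in> Rbar. P w} \<in> sets Rbar_M"
proof -
  have "Some -` {w \<in> Rbar. P w} = {z. Im z = 0 \<and> P (Some z)}" by (auto simp: Rbar_def)
  with assms show ?thesis by (simp add: sets_Rbar_M)
qed

lemma singleton_None_in_sets_Rbar_M: "{None} \<in> sets Rbar_M"
proof -
  have "{w \<in> Rbar. w = None} \<in> sets Rbar_M" by (rule Collect_Rbar_in_sets_Rbar_M) simp
  moreover have "{w \<in> Rbar. w = None} = {None}" by (auto simp: Rbar_def)
  ultimately show ?thesis by simp
qed

lemma real_trace_in_sets_borel: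
  assumes "A \<in> sets Rbar_M"
  shows "{t. Some (of_real t) \<in> A} \<in> sets borel"
proof -
  have "Some -` A \<in> sets borel" using assms by (simp add: sets_Rbar_M)
  with borel_measurable_continuous_onI[of complex_of_real]
  have "complex_of_real -` (Some -` A) \<in> sets borel"
    by (intro measurable_sets_borel) (auto intro: continuous_intros)
  then show ?thesis by (simp add: vimage_def)
qed

lemma measurable_Rbar_M_borel:
  fixes f :: "complex option \<Rightarrow> 'b::topological_space"
  assumes "(\<lambda>z. f (Some z)) \<in> borel_measurable borel"
  shows "f \<in> borel_measurable Rbar_M"
proof (rule borel_measurableI)
  fix U :: "'b set" assume "open U"
  have "{z. Im z = 0 \<and> f (Some z) \<in> U} = {z. Im z = 0} \<inter> (\<lambda>z. f (Some z)) -` U" by auto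
  also have "\<dots> \<in> sets borel"
    using borel_real_axis measurable_sets_borel[OF assms borel_open[OF \<open>open U\<close>]] by (rule sets.Int)
  finally have "{z. Im z = 0 \<and> f (Some z) \<in> U} \<in> sets borel" .
  moreover have "f -` U \<inter> space Rbar_M = {w \<in> Rbar. f w \<in> U}" by (auto simp: space_Rbar_M)
  ultimately show "f -` U \<inter> space Rbar_M \<in> sets Rbar_M" by (simp add: Collect_Rbar_in_sets_Rbar_M)
qed

lemma measurable_Rbar_M_Rbar_M:
  assumes maps: "\<And>w. w \<in> Rbar \<Longrightarrow> g w \<in> Rbar"
    and pre: "\<And>C b. C \<in> sets borel \<Longrightarrow>
      {z. Im z = 0 \<and> (case g (Some z) of None \<Rightarrow> b | Some u \<Rightarrow> u \<in> C)} \<in> sets borel"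
  shows "g \<in> measurable Rbar_M Rbar_M"
proof (rule measurableI)
  fix A assume "A \<in> sets Rbar_M"
  then have "Some -` A \<in> sets borel" by (simp add: sets_Rbar_M)
  moreover have "(case g (Some z) of None \<Rightarrow> None \<in> A | Some u \<Rightarrow> u \<in> Some -` A) \<longleftrightarrow> g (Some z) \<in> A"
    for z by (cases "g (Some z)") auto
  ultimately have "{w \<in> Rbar. g w \<in> A} \<in> sets Rbar_M"
    using pre[of "Some -` A" "None \<in> A"] by (intro Collect_Rbar_in_sets_Rbar_M) simp
  moreover have "g -` A \<inter> space Rbar_M = {w \<in> Rbar. g w \<in> A}" by (auto simp: space_Rbar_M)
  ultimately show "g -` A \<inter> space Rbar_M \<in> sets Rbar_M" by simp
qed (use maps in \<open>simp add: space_Rbar_M\<close>)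

lemma refl_Rbar: "w \<in> Rbar \<Longrightarrow> refl L w \<in> Rbar"
proof (cases L)
  case (VLine x)
  then show "w \<in> Rbar \<Longrightarrow> ?thesis" by (cases w) (auto simp: refl_def Rbar_def)
next
  case (Circ x r)
  have "Im (of_real (r\<^sup>2) / (cnj (of_real t) - of_real x) + of_real x) = 0" for t
    by (simp flip: of_real_diff of_real_divide)
  with Circ show "w \<in> Rbar \<Longrightarrow> ?thesis"
    by (cases w) (auto simp: refl_def Rbar_def complex_is_Real_iff elim!: Reals_cases)
qed

lemma measurable_refl: "refl L \<in> measurable Rbar_M Rbar_M"
proof (rule measurable_Rbar_M_Rbar_M)
  fix C :: "complex set" and b assume C: "C \<in> sets borel"
  show "{z. Im z = 0 \<and> (case refl L (Some z) of None \<Rightarrow> b | Some u \<Rightarrow> u \<in> C)} \<in> sets borel"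
  proof (cases L)
    case (VLine x)
    define h where "h z = 2 * of_real x - cnj z" for z
    have "h \<in> borel_measurable borel"
      unfolding h_def by (intro borel_measurable_continuous_onI continuous_intros)
    with C have "{z. Im z = 0} \<inter> h -` C \<in> sets borel"
      by (intro sets.Int borel_real_axis measurable_sets_borel)
    moreover have "{z. Im z = 0 \<and> (case refl L (Some z) of None \<Rightarrow> b | Some u \<Rightarrow> u \<in> C)} =
        {z. Im z = 0} \<inter> h -` C"
      by (auto simp: VLine refl_def h_def)
    ultimately show ?thesis by simp
  next
    case (Circ x r)
    define h where "h z = of_real (r\<^sup>2) / (cnj z - of_real x) + of_real x" for z
    have "h \<in> borel_measurable borel" unfolding h_def
      by (intro borel_measurable_add borel_measurable_divide borel_measurable_continuous_onI
          continuous_intros)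
    moreover have "{complex_of_real x} \<in> sets borel" by (rule borel_closed) simp
    ultimately have "{z. Im z = 0} \<inter> ((if b then {of_real x} else {}) \<union> (h -` C - {of_real x}))
        \<in> sets borel"
      using C by (intro sets.Int sets.Un sets.Diff borel_real_axis measurable_sets_borel) auto
    moreover have "{z. Im z = 0 \<and> (case refl L (Some z) of None \<Rightarrow> b | Some u \<Rightarrow> u \<in> C)} =
        {z. Im z = 0} \<inter> ((if b then {of_real x} else {}) \<union> (h -` C - {of_real x}))"
      by (auto simp: Circ refl_def h_def)
    ultimately show ?thesis by simp
  qed
qed (rule refl_Rbar)

lemma measurable_tau: "tau L z0 \<in> measurable Rbar_M Rbar_M"
proof -
  define s where "s = side L (Some z0)"
  have "continuous_on UNIV (\<lambda>z. side L (Some z))"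
    by (cases L) (auto simp: side_def intro!: continuous_intros)
  then have "{z. 0 < side L (Some z) * s} \<in> sets borel"
    by (intro borel_open open_Collect_less continuous_intros) auto
  then have "{z. Im z = 0} \<inter> {z. 0 < side L (Some z) * s} \<in> sets borel"
    by (intro sets.Int borel_real_axis)
  then have "{w \<in> space Rbar_M. same_side L w (Some z0)} \<in> sets Rbar_M"
    unfolding space_Rbar_M same_side_def s_def by (intro Collect_Rbar_in_sets_Rbar_M) (simp add: Int_def)
  then show ?thesis unfolding tau_def by (intro measurable_If measurable_refl measurable_ident_sets refl)
qed

section \<open>Random walks driven by independent uniform steps\<close>

definition words :: "'i set \<Rightarrow> nat \<Rightarrow> 'i list set" where
  "words K m = {xs. set xs \<subseteq> K \<and> length xs = m}"

lemma finite_words: "finite K \<Longrightarrow> finite (words K m)"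
  unfolding words_def by (rule finite_lists_length_eq)

lemma sum_words_Suc: "(\<Sum>s\<in>words K (Suc m). G s) = (\<Sum>i\<in>K. \<Sum>s\<in>words K m. G (i # s))"
proof -
  have "(\<Sum>s\<in>words K (Suc m). G s) = (\<Sum>s\<in>(\<lambda>(xs, i). i # xs) ` (words K m \<times> K). G s)"
    unfolding words_def lists_length_Suc_eq ..
  also have "\<dots> = (\<Sum>(s, i)\<in>words K m \<times> K. G (i # s))"
    by (subst sum.reindex) (auto simp: inj_on_def case_prod_beta)
  also have "\<dots> = (\<Sum>i\<in>K. \<Sum>s\<in>words K m. G (i # s))"
    by (simp add: sum.cartesian_product[symmetric] sum.swap[of _ K])
  finally show ?thesis .
qed

definition step_prefix :: "(nat \<Rightarrow> 'a \<Rightarrow> 'i) \<Rightarrow> nat \<Rightarrow> 'a \<Rightarrow> 'i list" where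
  "step_prefix I m \<omega> = map (\<lambda>k. I k \<omega>) [0..<m]"

locale uniform_iid_steps = prob_space +
  fixes I :: "nat \<Rightarrow> 'a \<Rightarrow> 'i" and K :: "'i set"
  assumes finite_K: "finite K"
    and indep_steps: "indep_vars (\<lambda>_. count_space K) I UNIV"
    and prob_step: "\<And>n k. k \<in> K \<Longrightarrow> prob {\<omega> \<in> space M. I n \<omega> = k} = 1 / card K"
begin

lemma measurable_step: "I n \<in> measurable M (count_space K)"
  using indep_steps by (simp add: indep_vars_def)

lemma step_in_K: "\<omega> \<in> space M \<Longrightarrow> I n \<omega> \<in> K"
  using measurable_space[OF measurable_step] by simp

lemma card_K_pos: "card K > 0"
proof -
  obtain \<omega> where "\<omega> \<in> space M" using not_empty by blast
  then have "K \<noteq> {}" using step_in_K by blast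
  with finite_K show ?thesis by (simp add: card_gt_0_iff)
qed

lemma step_prefix_in_words: "\<omega> \<in> space M \<Longrightarrow> step_prefix I m \<omega> \<in> words K m"
  by (auto simp: step_prefix_def words_def step_in_K)

lemma step_prefix_eq_iff:
  "length s = m \<Longrightarrow> step_prefix I m \<omega> = s \<longleftrightarrow> (\<forall>k\<in>{..<m}. I k \<omega> = s ! k)"
  by (auto simp: step_prefix_def list_eq_iff_nth_eq)

lemma sets_step_prefix_eq: "{\<omega> \<in> space M. step_prefix I m \<omega> = s} \<in> sets M"
proof (cases "length s = m")
  case True
  have "{\<omega> \<in> space M. I k \<omega> = j} \<in> sets M" for k j
    using measurable_sets[OF measurable_step, of "{j} \<inter> K" k] step_in_K
    by (auto simp: vimage_def Int_def conj_commute cong: rev_conj_cong)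
  then show ?thesis unfolding step_prefix_eq_iff[OF True]
    by (intro sets.sets_Collect_finite_All) auto
next
  case False
  then have "{\<omega> \<in> space M. step_prefix I m \<omega> = s} = {}" by (auto simp: step_prefix_def)
  then show ?thesis by (metis sets.empty_sets)
qed

lemma measurable_step_prefix: "step_prefix I m \<in> measurable M (count_space (words K m))"
  unfolding measurable_count_space_eq2[OF finite_words[OF finite_K]]
proof (intro conjI ballI)
  fix s
  have "step_prefix I m -` {s} \<inter> space M = {\<omega> \<in> space M. step_prefix I m \<omega> = s}" by auto
  then show "step_prefix I m -` {s} \<inter> space M \<in> sets M" using sets_step_prefix_eq by simp
qed (use step_prefix_in_words in blast)

lemma prob_step_prefix_eq:
  assumes "s \<in> words K m"
  shows "prob {\<omega> \<in> space M. step_prefix I m \<omega> = s} = (1 / card K) ^ m"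
proof (cases "m = 0")
  case True
  with assms have "{\<omega> \<in> space M. step_prefix I m \<omega> = s} = space M"
    by (auto simp: step_prefix_def words_def)
  with True show ?thesis by (simp add: prob_space)
next
  case False
  from assms have len: "length s = m" and s_K: "\<And>k. k < m \<Longrightarrow> s ! k \<in> K"
    by (auto simp: words_def)
  have "{\<omega> \<in> space M. step_prefix I m \<omega> = s} = (\<Inter>k\<in>{..<m}. I k -` {s ! k} \<inter> space M)"
    using False by (auto simp: step_prefix_eq_iff[OF len])
  also have "prob \<dots> = (\<Prod>k\<in>{..<m}. prob (I k -` {s ! k} \<inter> space M))"
    using False s_K by (intro indep_varsD[OF indep_steps]) auto
  also have "\<dots> = (\<Prod>k\<in>{..<m}. 1 / card K)"
    using s_K prob_step by (intro prod.cong) (auto simp: vimage_def Int_def conj_commute)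
  finally show ?thesis by simp
qed

lemma integral_step_prefix:
  fixes g :: "'i list \<Rightarrow> real"
  shows "(\<integral>\<omega>. g (step_prefix I m \<omega>) \<partial>M) = (\<Sum>s\<in>words K m. g s) / card K ^ m"
proof -
  define E where "E s = {\<omega> \<in> space M. step_prefix I m \<omega> = s}" for s
  have E: "E s \<in> sets M" for s by (simp add: E_def sets_step_prefix_eq)
  have "(\<integral>\<omega>. g (step_prefix I m \<omega>) \<partial>M) = (\<integral>\<omega>. (\<Sum>s\<in>words K m. g s * indicator (E s) \<omega>) \<partial>M)"
  proof (rule Bochner_Integration.integral_cong)
    fix \<omega> assume "\<omega> \<in> space M"
    with step_prefix_in_words finite_words[OF finite_K]
    show "g (step_prefix I m \<omega>) = (\<Sum>s\<in>words K m. g s * indicator (E s) \<omega>)"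
      by (simp add: E_def indicator_def if_distrib sum.delta cong: conj_cong)
  qed simp
  also have "\<dots> = (\<Sum>s\<in>words K m. g s * prob (E s))"
    using E by (simp add: integral_sum integrable_real_indicator emeasure_eq_measure)
  also have "\<dots> = (\<Sum>s\<in>words K m. g s) / card K ^ m"
    by (simp add: E_def prob_step_prefix_eq sum_divide_distrib power_one_over cong: sum.cong)
  finally show ?thesis .
qed

lemma integral_foldr_steps_Suc:
  fixes T :: "'i \<Rightarrow> 'b \<Rightarrow> 'b" and f :: "'b \<Rightarrow> real"
  shows "(\<integral>\<omega>. f (foldr (\<lambda>k. T (I k \<omega>)) [0..<Suc m] x0) \<partial>M) =
    (\<Sum>i\<in>K. \<integral>\<omega>. f (T i (foldr (\<lambda>k. T (I k \<omega>)) [0..<m] x0)) \<partial>M) / card K"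
proof -
  have walk: "foldr (\<lambda>k. T (I k \<omega>)) [0..<n] x0 = foldr T (step_prefix I n \<omega>) x0" for n \<omega>
    by (simp add: step_prefix_def foldr_map comp_def)
  have "(\<integral>\<omega>. f (foldr T (step_prefix I (Suc m) \<omega>) x0) \<partial>M) =
      (\<Sum>i\<in>K. \<Sum>s\<in>words K m. f (T i (foldr T s x0))) / (card K * card K ^ m)"
    by (simp add: integral_step_prefix[of "\<lambda>s. f (foldr T s x0)"] sum_words_Suc)
  also have "\<dots> = (\<Sum>i\<in>K. (\<Sum>s\<in>words K m. f (T i (foldr T s x0))) / card K ^ m) / card K"
    by (simp add: sum_divide_distrib mult.commute)
  also have "\<dots> = (\<Sum>i\<in>K. \<integral>\<omega>. f (T i (foldr T (step_prefix I m \<omega>) x0)) \<partial>M) / card K"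
    using integral_step_prefix[of "\<lambda>s. f (T _ (foldr T s x0))"] by simp
  finally show ?thesis unfolding walk .
qed

end

definition hbar_test :: "(complex option \<Rightarrow> real) \<Rightarrow> bool" where
  "hbar_test f \<longleftrightarrow> (\<forall>w l. hbar_tendsto w l \<longrightarrow> (\<lambda>n. f (w n)) \<longlonglongrightarrow> f l) \<and>
     (\<exists>B. \<forall>w. \<bar>f w\<bar> \<le> B) \<and> f \<in> borel_measurable Rbar_M"

lemma hbar_test_comp:
  assumes "hbar_test f" and "hbar_continuous T" and "T \<in> measurable Rbar_M Rbar_M"
  shows "hbar_test (\<lambda>w. f (T w))"
  using assms measurable_comp[OF assms(3), of f borel]
  by (auto simp: hbar_test_def hbar_continuous_def comp_def)

context uniform_iid_steps
begin

lemma tendsto_integral_walk: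
  fixes T :: "'i \<Rightarrow> complex option \<Rightarrow> complex option"
  assumes f: "hbar_test f" and \<zeta>: "\<zeta> \<in> measurable M Rbar_M"
    and lim: "AE \<omega> in M. hbar_tendsto (\<lambda>m. foldr (\<lambda>k. T (I k \<omega>)) [0..<m] x0) (\<zeta> \<omega>)"
  shows "(\<lambda>m. \<integral>\<omega>. f (foldr (\<lambda>k. T (I k \<omega>)) [0..<m] x0) \<partial>M) \<longlonglongrightarrow> (\<integral>\<omega>. f (\<zeta> \<omega>) \<partial>M)"
proof -
  from f obtain B where B: "\<And>w. \<bar>f w\<bar> \<le> B" by (auto simp: hbar_test_def)
  have walk: "foldr (\<lambda>k. T (I k \<omega>)) [0..<m] x0 = foldr T (step_prefix I m \<omega>) x0" for m \<omega>
    by (simp add: step_prefix_def foldr_map comp_def)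
  show ?thesis
  proof (rule integral_dominated_convergence[where w = "\<lambda>_. B"])
    show "(\<lambda>\<omega>. f (\<zeta> \<omega>)) \<in> borel_measurable M"
      using measurable_comp[OF \<zeta>, of f] f by (simp add: hbar_test_def comp_def)
    show "(\<lambda>\<omega>. f (foldr (\<lambda>k. T (I k \<omega>)) [0..<m] x0)) \<in> borel_measurable M" for m
      using measurable_comp[OF measurable_step_prefix[of m], where g = "\<lambda>s. f (foldr T s x0)" and L = borel]
      by (simp add: walk comp_def)
    show "AE \<omega> in M. (\<lambda>m. f (foldr (\<lambda>k. T (I k \<omega>)) [0..<m] x0)) \<longlonglongrightarrow> f (\<zeta> \<omega>)"
      using lim by (rule AE_mp) (use f in \<open>simp add: hbar_test_def\<close>)
  qed (simp_all add: B)
qed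

lemma integral_limit_eq_average:
  fixes T :: "'i \<Rightarrow> complex option \<Rightarrow> complex option"
  assumes f: "hbar_test f" and \<zeta>: "\<zeta> \<in> measurable M Rbar_M"
    and lim: "AE \<omega> in M. hbar_tendsto (\<lambda>m. foldr (\<lambda>k. T (I k \<omega>)) [0..<m] x0) (\<zeta> \<omega>)"
    and T: "\<And>i. i \<in> K \<Longrightarrow> hbar_continuous (T i) \<and> T i \<in> measurable Rbar_M Rbar_M"
  shows "(\<integral>\<omega>. f (\<zeta> \<omega>) \<partial>M) = (\<Sum>i\<in>K. \<integral>\<omega>. f (T i (\<zeta> \<omega>)) \<partial>M) / card K"
proof -
  let ?z = "\<lambda>m \<omega>. foldr (\<lambda>k. T (I k \<omega>)) [0..<m] x0"
  have "(\<lambda>m. \<integral>\<omega>. f (?z (Suc m) \<omega>) \<partial>M) \<longlonglongrightarrow> (\<integral>\<omega>. f (\<zeta> \<omega>) \<partial>M)"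
    using LIMSEQ_Suc[OF tendsto_integral_walk[OF f \<zeta> lim]] .
  moreover have "(\<lambda>m. \<integral>\<omega>. f (T i (?z m \<omega>)) \<partial>M) \<longlonglongrightarrow> (\<integral>\<omega>. f (T i (\<zeta> \<omega>)) \<partial>M)"
    if "i \<in> K" for i
    using T[OF that] tendsto_integral_walk[OF hbar_test_comp[OF f] \<zeta> lim] by blast
  then have "(\<lambda>m. (\<Sum>i\<in>K. \<integral>\<omega>. f (T i (?z m \<omega>)) \<partial>M) / card K)
      \<longlonglongrightarrow> (\<Sum>i\<in>K. \<integral>\<omega>. f (T i (\<zeta> \<omega>)) \<partial>M) / card K"
    using card_K_pos by (intro tendsto_divide tendsto_sum tendsto_const) auto
  ultimately show ?thesis unfolding integral_foldr_steps_Suc by (rule LIMSEQ_unique)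
qed

lemma integral_law_eq_average:
  fixes T :: "'i \<Rightarrow> complex option \<Rightarrow> complex option"
  assumes f: "hbar_test f" and \<zeta>: "\<zeta> \<in> measurable M Rbar_M"
    and lim: "AE \<omega> in M. hbar_tendsto (\<lambda>m. foldr (\<lambda>k. T (I k \<omega>)) [0..<m] x0) (\<zeta> \<omega>)"
    and T: "\<And>i. i \<in> K \<Longrightarrow> hbar_continuous (T i) \<and> T i \<in> measurable Rbar_M Rbar_M"
  shows "(\<integral>w. f w \<partial>distr M Rbar_M \<zeta>) =
    (\<Sum>i\<in>K. \<integral>w. f w \<partial>distr (distr M Rbar_M \<zeta>) Rbar_M (T i)) / card K"
proof -
  have f_meas: "f \<in> borel_measurable Rbar_M" using f by (simp add: hbar_test_def)
  have "(\<integral>w. f w \<partial>distr (distr M Rbar_M \<zeta>) Rbar_M (T i)) = (\<integral>\<omega>. f (T i (\<zeta> \<omega>)) \<partial>M)"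
    if "i \<in> K" for i
    using T[OF that] measurable_comp[OF _ f_meas, of "T i"] \<zeta>
    by (simp add: integral_distr f_meas comp_def)
  then show ?thesis
    using integral_limit_eq_average[OF f \<zeta> lim T] by (simp add: integral_distr \<zeta> f_meas)
qed

end

section \<open>Test functions determine laws on the extended real axis\<close>

lemma hbar_test_case_option:
  assumes cont: "continuous_on UNIV \<phi>" and bound: "\<And>z. \<bar>\<phi> z\<bar> \<le> B"
    and support: "\<And>z. R < cmod z \<Longrightarrow> \<phi> z = 0"
  shows "hbar_test (case_option 0 \<phi>)"
  unfolding hbar_test_def
proof (intro conjI allI impI exI)
  fix w l assume w: "hbar_tendsto w l"
  show "(\<lambda>n. case_option 0 \<phi> (w n)) \<longlonglongrightarrow> case_option 0 \<phi> l"
  proof (cases l)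
    case None
    from w have "\<forall>\<^sub>F n in sequentially. \<forall>z. w n = Some z \<longrightarrow> R < dist z 0"
      unfolding None hbar_tendsto_None_iff[where c = 0] by blast
    then have "\<forall>\<^sub>F n in sequentially. case_option 0 \<phi> (w n) = 0"
      by (rule eventually_mono) (auto simp: support split: option.split)
    then show ?thesis unfolding None by (simp add: tendsto_eventually)
  next
    case (Some a)
    with w have finite: "\<forall>\<^sub>F n in sequentially. w n = Some (the (w n))"
      and "(\<lambda>n. the (w n)) \<longlonglongrightarrow> a"
      by (auto simp: hbar_tendsto_def elim: eventually_mono)
    moreover have "isCont \<phi> a" using cont by (simp add: continuous_on_eq_continuous_at)
    ultimately have "(\<lambda>n. \<phi> (the (w n))) \<longlonglongrightarrow> \<phi> a" by (metis isCont_tendsto_compose)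
    moreover from finite have "\<forall>\<^sub>F n in sequentially. \<phi> (the (w n)) = case_option 0 \<phi> (w n)"
      by (rule eventually_mono) (metis option.simps(5))
    ultimately show ?thesis unfolding Some by (simp add: Lim_transform_eventually)
  qed
next
  show "\<bar>case_option 0 \<phi> w\<bar> \<le> max 0 B" for w using bound[of "the w"] by (cases w) auto
next
  show "case_option 0 \<phi> \<in> borel_measurable Rbar_M"
    using cont by (intro measurable_Rbar_M_borel borel_measurable_continuous_onI) simp
qed

definition interval_bump :: "real \<Rightarrow> real \<Rightarrow> nat \<Rightarrow> complex \<Rightarrow> real" where
  "interval_bump a b k z =
     max 0 (1 - (real k + 1) * max 0 (max (a - Re z) (Re z - b))) * max 0 (1 - \<bar>Im z\<bar>)"

lemma hbar_test_interval_bump: "hbar_test (case_option 0 (interval_bump a b k))"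
proof (rule hbar_test_case_option)
  show "continuous_on UNIV (interval_bump a b k)"
    unfolding interval_bump_def by (intro continuous_intros)
  show "\<bar>interval_bump a b k z\<bar> \<le> 1" for z
    unfolding interval_bump_def by (auto simp: abs_mult intro!: mult_le_one)
  fix z :: complex assume z: "\<bar>a\<bar> + \<bar>b\<bar> + 2 < cmod z"
  then have "1 \<le> \<bar>Im z\<bar> \<or> \<bar>a\<bar> + \<bar>b\<bar> + 1 \<le> \<bar>Re z\<bar>" using cmod_le[of z] by linarith
  then show "interval_bump a b k z = 0"
  proof
    assume "\<bar>a\<bar> + \<bar>b\<bar> + 1 \<le> \<bar>Re z\<bar>"
    then have "1 \<le> max 0 (max (a - Re z) (Re z - b))" by linarith
    moreover have "1 \<le> real k + 1" by simp
    ultimately have "1 \<le> (real k + 1) * max 0 (max (a - Re z) (Re z - b))"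
      using mult_mono[of 1 "real k + 1" 1] by simp
    then show ?thesis by (simp add: interval_bump_def)
  qed (simp add: interval_bump_def)
qed

lemma tendsto_interval_bump:
  assumes "Im z = 0"
  shows "(\<lambda>k. interval_bump a b k z) \<longlonglongrightarrow> indicator {a..b} (Re z)"
proof (cases "Re z \<in> {a..b}")
  case True
  with assms show ?thesis by (simp add: interval_bump_def)
next
  case False
  define d where "d = max 0 (max (a - Re z) (Re z - b))"
  from False have "d > 0" by (auto simp: d_def)
  obtain N :: nat where N: "1 / d < real N" using reals_Archimedean2 by blast
  have "interval_bump a b k z = 0" if "N \<le> k" for k
  proof -
    from N that have "1 / d < real k + 1" by linarith
    with \<open>d > 0\<close> have "1 < (real k + 1) * d" by (simp add: divide_less_eq)
    then show ?thesis by (simp add: interval_bump_def d_def[symmetric])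
  qed
  then have "\<forall>\<^sub>F k in sequentially. interval_bump a b k z = 0"
    unfolding eventually_sequentially by blast
  then have "(\<lambda>k. interval_bump a b k z) \<longlonglongrightarrow> 0" by (rule tendsto_eventually)
  with False show ?thesis by simp
qed

definition axis_set :: "real set \<Rightarrow> complex option set" where
  "axis_set C = {Some z | z. Im z = 0 \<and> Re z \<in> C}"

lemma axis_set_in_sets_Rbar_M:
  assumes "C \<in> sets borel"
  shows "axis_set C \<in> sets Rbar_M"
proof -
  have "{z. Im z = 0} \<inter> Re -` C \<in> sets borel"
    using assms by (intro sets.Int borel_real_axis measurable_sets_borel[OF borel_measurable_Re])
  then have "{w \<in> Rbar. case_option False (\<lambda>z. Re z \<in> C) w} \<in> sets Rbar_M"
    by (intro Collect_Rbar_in_sets_Rbar_M) (simp add: Int_def vimage_def)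
  moreover have "axis_set C = {w \<in> Rbar. case_option False (\<lambda>z. Re z \<in> C) w}"
    by (auto simp: axis_set_def Rbar_def split: option.splits)
  ultimately show ?thesis by simp
qed

locale Rbar_prob = prob_space N for N :: "complex option measure" +
  assumes sets_N: "sets N = sets Rbar_M"

lemma Rbar_prob_distr: "prob_space M \<Longrightarrow> f \<in> measurable M Rbar_M \<Longrightarrow> Rbar_prob (distr M Rbar_M f)"
  by (intro Rbar_prob.intro Rbar_prob_axioms.intro prob_space.prob_space_distr) simp_all

context Rbar_prob
begin

lemma space_N: "space N = Rbar"
  using sets_eq_imp_space_eq[OF sets_N] by (simp add: space_Rbar_M)

lemma measurable_N_iff: "measurable N X = measurable Rbar_M X"
  by (rule measurable_cong_sets[OF sets_N refl])

lemma axis_set_in_events: "C \<in> sets borel \<Longrightarrow> axis_set C \<in> events"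
  using axis_set_in_sets_Rbar_M sets_N by simp

lemma tendsto_integral_interval_bump:
  "(\<lambda>k. \<integral>w. case_option 0 (interval_bump a b k) w \<partial>N) \<longlonglongrightarrow> prob (axis_set {a..b})"
proof -
  have "(\<lambda>k. \<integral>w. case_option 0 (interval_bump a b k) w \<partial>N) \<longlonglongrightarrow> (\<integral>w. indicator (axis_set {a..b}) w \<partial>N)"
  proof (rule integral_dominated_convergence[where w = "\<lambda>_. 1"])
    show "case_option 0 (interval_bump a b k) \<in> borel_measurable N" for k
      using hbar_test_interval_bump[of a b k] by (simp add: hbar_test_def measurable_N_iff)
    show "AE w in N. norm (case_option 0 (interval_bump a b k) w) \<le> 1" for k
      unfolding interval_bump_def by (auto simp: abs_mult intro!: mult_le_one split: option.split)
    show "AE w in N. (\<lambda>k. case_option 0 (interval_bump a b k) w) \<longlonglongrightarrow> indicator (axis_set {a..b}) w"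
    proof (rule AE_I2)
      fix w assume w: "w \<in> space N"
      show "(\<lambda>k. case_option 0 (interval_bump a b k) w) \<longlonglongrightarrow> indicator (axis_set {a..b}) w"
      proof (cases w)
        case (Some z)
        with w have "Im z = 0" by (auto simp: space_N Rbar_def)
        moreover have "indicator (axis_set {a..b}) w = (indicator {a..b} (Re z) :: real)"
          using Some \<open>Im z = 0\<close> by (auto simp: axis_set_def indicator_def)
        ultimately show ?thesis using tendsto_interval_bump Some by simp
      qed (simp add: axis_set_def)
    qed
  qed (use axis_set_in_events in simp_all)
  then show ?thesis using axis_set_in_events by simp
qed

lemma axis_set_UNIV_eq_UN: "axis_set UNIV = (\<Union>n. axis_set {- real n..real n})"
proof (intro equalityI subsetI)
  fix w assume "w \<in> axis_set UNIV"
  then obtain z where z: "w = Some z" "Im z = 0" by (auto simp: axis_set_def)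
  obtain n :: nat where "\<bar>Re z\<bar> \<le> real n" using real_arch_simple by blast
  with z show "w \<in> (\<Union>n. axis_set {- real n..real n})"
    unfolding axis_set_def by (intro UN_I[of n]) auto
qed (auto simp: axis_set_def)

lemma tendsto_prob_axis_set_UNIV:
  "(\<lambda>n. prob (axis_set {- real n..real n})) \<longlonglongrightarrow> prob (axis_set UNIV)"
proof -
  have "range (\<lambda>n. axis_set {- real n..real n}) \<subseteq> events" using axis_set_in_events by auto
  moreover have "incseq (\<lambda>n. axis_set {- real n..real n})"
    by (rule incseq_SucI) (auto simp: axis_set_def)
  ultimately show ?thesis unfolding axis_set_UNIV_eq_UN by (rule finite_Lim_measure_incseq)
qed

lemma prob_axis_set_Compl:
  "A \<in> sets borel \<Longrightarrow> prob (axis_set (- A)) = prob (axis_set UNIV) - prob (axis_set A)"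
proof -
  assume "A \<in> sets borel"
  have "axis_set (- A) = axis_set UNIV - axis_set A" by (auto simp: axis_set_def)
  moreover have "axis_set A \<subseteq> axis_set UNIV" by (auto simp: axis_set_def)
  ultimately show ?thesis
    using axis_set_in_events[OF \<open>A \<in> sets borel\<close>] axis_set_in_events[of UNIV]
    by (simp add: finite_measure_Diff)
qed

lemma sums_prob_axis_set:
  assumes "\<And>i. A i \<in> sets borel" and "disjoint_family A"
  shows "(\<lambda>i. prob (axis_set (A i))) sums prob (axis_set (\<Union>i. A i))"
proof -
  have "axis_set (\<Union>i. A i) = (\<Union>i. axis_set (A i))" by (auto simp: axis_set_def)
  moreover have "disjoint_family (\<lambda>i. axis_set (A i))"
    using assms(2) by (auto simp: disjoint_family_on_def axis_set_def)
  ultimately show ?thesis using assms(1) axis_set_in_events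
    by (simp add: finite_measure_UNION image_subset_iff)
qed

lemma prob_eq_axis_part:
  assumes A: "A \<in> sets Rbar_M"
  shows "prob A = prob (axis_set {t. Some (of_real t) \<in> A}) +
           (if None \<in> A then 1 - prob (axis_set UNIV) else 0)"
proof -
  define C where "C = {t. Some (of_real t) \<in> A}"
  from A have "C \<in> sets borel" unfolding C_def by (rule real_trace_in_sets_borel)
  have real: "Im z = 0 \<Longrightarrow> of_real (Re z) = z" for z by (simp add: complex_eq_iff)
  have axis: "A - {None} = axis_set C"
  proof (intro equalityI subsetI)
    fix w assume w: "w \<in> A - {None}"
    then obtain z where "w = Some z" by (cases w) auto
    moreover from w A have "w \<in> Rbar" by (auto simp: sets_Rbar_M)
    ultimately show "w \<in> axis_set C" using w real by (auto simp: axis_set_def C_def Rbar_def)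
  qed (use real in \<open>auto simp: axis_set_def C_def\<close>)
  have "{None} = space N - axis_set UNIV" by (auto simp: space_N Rbar_def axis_set_def)
  then have infinity: "prob {None} = 1 - prob (axis_set UNIV)"
    using prob_compl axis_set_in_events[of UNIV] by simp
  show ?thesis
  proof (cases "None \<in> A")
    case True
    then have "A = axis_set C \<union> {None}" using axis by blast
    moreover have "axis_set C \<inter> {None} = {}" by (auto simp: axis_set_def)
    ultimately have "prob A = prob (axis_set C) + prob {None}"
      using finite_measure_Union[of "axis_set C" "{None}"] axis_set_in_events[OF \<open>C \<in> sets borel\<close>]
        singleton_None_in_sets_Rbar_M sets_N
      by simp
    with True infinity show ?thesis by (simp add: C_def)
  next
    case False
    with axis show ?thesis by (auto simp: C_def)
  qed
qed

end

context
  fixes N :: "complex option measure" and Ns :: "'i \<Rightarrow> complex option measure" and J :: "'i set"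
  assumes N: "Rbar_prob N" and Ns: "\<And>j. j \<in> J \<Longrightarrow> Rbar_prob (Ns j)"
    and J: "finite J" "J \<noteq> {}"
    and integral_eq: "\<And>f. hbar_test f \<Longrightarrow> (\<integral>w. f w \<partial>N) = (\<Sum>j\<in>J. \<integral>w. f w \<partial>Ns j) / card J"
begin

lemma measure_axis_set_interval_average:
  "measure N (axis_set {a..b}) = (\<Sum>j\<in>J. measure (Ns j) (axis_set {a..b})) / card J"
proof -
  let ?f = "\<lambda>k. case_option 0 (interval_bump a b k)"
  have "(\<lambda>k. \<integral>w. ?f k w \<partial>Ns j) \<longlonglongrightarrow> measure (Ns j) (axis_set {a..b})" if "j \<in> J" for j
    using Rbar_prob.tendsto_integral_interval_bump[OF Ns[OF that]] .
  then have "(\<lambda>k. (\<Sum>j\<in>J. \<integral>w. ?f k w \<partial>Ns j) / card J)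
      \<longlonglongrightarrow> (\<Sum>j\<in>J. measure (Ns j) (axis_set {a..b})) / card J"
    using J by (intro tendsto_divide tendsto_sum tendsto_const) auto
  moreover have "(\<lambda>k. \<integral>w. ?f k w \<partial>N) \<longlonglongrightarrow> measure N (axis_set {a..b})"
    using Rbar_prob.tendsto_integral_interval_bump[OF N] .
  ultimately show ?thesis
    unfolding integral_eq[OF hbar_test_interval_bump] by (rule LIMSEQ_unique[rotated])
qed

lemma measure_axis_set_UNIV_average:
  "measure N (axis_set UNIV) = (\<Sum>j\<in>J. measure (Ns j) (axis_set UNIV)) / card J"
proof -
  let ?I = "\<lambda>n. axis_set {- real n..real n}"
  have "(\<lambda>n. measure (Ns j) (?I n)) \<longlonglongrightarrow> measure (Ns j) (axis_set UNIV)" if "j \<in> J" for j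
    using Rbar_prob.tendsto_prob_axis_set_UNIV[OF Ns[OF that]] .
  then have "(\<lambda>n. (\<Sum>j\<in>J. measure (Ns j) (?I n)) / card J)
      \<longlonglongrightarrow> (\<Sum>j\<in>J. measure (Ns j) (axis_set UNIV)) / card J"
    using J by (intro tendsto_divide tendsto_sum tendsto_const) auto
  moreover have "(\<lambda>n. measure N (?I n)) \<longlonglongrightarrow> measure N (axis_set UNIV)"
    using Rbar_prob.tendsto_prob_axis_set_UNIV[OF N] .
  ultimately show ?thesis
    unfolding measure_axis_set_interval_average by (rule LIMSEQ_unique[rotated])
qed

lemma measure_axis_set_average:
  "C \<in> sets borel \<Longrightarrow> measure N (axis_set C) = (\<Sum>j\<in>J. measure (Ns j) (axis_set C)) / card J"
proof (induction rule: borel_set_induct)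
  case empty
  then show ?case by (simp add: axis_set_def)
next
  case (interval a b)
  show ?case by (rule measure_axis_set_interval_average)
next
  case (compl A)
  with measure_axis_set_UNIV_average show ?case
    using Rbar_prob.prob_axis_set_Compl[OF N compl(1)] Rbar_prob.prob_axis_set_Compl[OF Ns compl(1)]
    by (simp add: sum_subtractf diff_divide_distrib cong: sum.cong)
next
  case (union A)
  have "(\<lambda>i. (\<Sum>j\<in>J. measure (Ns j) (axis_set (A i))) / card J)
      sums ((\<Sum>j\<in>J. measure (Ns j) (axis_set (\<Union>i. A i))) / card J)"
    using Rbar_prob.sums_prob_axis_set[OF Ns union(2,1)] by (intro sums_divide sums_sum) auto
  moreover have "(\<lambda>i. measure N (axis_set (A i))) sums measure N (axis_set (\<Union>i. A i))"
    using Rbar_prob.sums_prob_axis_set[OF N union(2,1)] .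
  ultimately show ?case unfolding union(3) by (rule sums_unique2[rotated])
qed

lemma emeasure_eq_average_if_integrals_eq:
  assumes A: "A \<in> sets Rbar_M"
  shows "emeasure N A = (\<Sum>j\<in>J. emeasure (Ns j) A) / card J"
proof -
  let ?C = "{t. Some (of_real t) \<in> A}"
  have C: "?C \<in> sets borel" using A by (rule real_trace_in_sets_borel)
  have "measure N A = (\<Sum>j\<in>J. measure (Ns j) A) / card J"
  proof (cases "None \<in> A")
    case True
    have "(\<Sum>j\<in>J. measure (Ns j) A) =
        (\<Sum>j\<in>J. measure (Ns j) (axis_set ?C)) + card J - (\<Sum>j\<in>J. measure (Ns j) (axis_set UNIV))"
      using True Rbar_prob.prob_eq_axis_part[OF Ns A] by (simp add: sum.distrib sum_subtractf)
    with True J show ?thesis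
      using Rbar_prob.prob_eq_axis_part[OF N A] measure_axis_set_average[OF C]
        measure_axis_set_UNIV_average
      by (simp add: diff_divide_distrib add_divide_distrib)
  next
    case False
    then show ?thesis
      using Rbar_prob.prob_eq_axis_part[OF N A] Rbar_prob.prob_eq_axis_part[OF Ns A]
        measure_axis_set_average[OF C]
      by simp
  qed
  moreover have "emeasure M' A = ennreal (measure M' A)" if "Rbar_prob M'" for M'
  proof -
    interpret Rbar_prob M' by (rule that)
    show ?thesis by (rule emeasure_eq_measure)
  qed
  ultimately show ?thesis
    using N Ns J
    by (simp add: ennreal_of_nat_eq_real_of_nat divide_ennreal sum_nonneg card_gt_0_iff cong: sum.cong)
qed

end

theorem mainTheorem3:
  fixes Ls :: "nat \<Rightarrow> hline" and z0 :: complex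
    and M :: "'a measure" and I :: "nat \<Rightarrow> 'a \<Rightarrow> nat" and \<zeta> :: "'a \<Rightarrow> complex option"
  assumes lines: "\<forall>i\<in>{1,2,3}. valid_line (Ls i)"
    and z0: "Im z0 > 0"
    and config: "\<forall>i\<in>{1,2,3::nat}. \<forall>i'\<in>{1,2,3}. i \<noteq> i' \<longrightarrow>
                   cond_a (Ls i) (Ls i') z0 \<or> cond_b (Ls i) (Ls i') z0"
    and P: "prob_space M"
    and indep: "prob_space.indep_vars M (\<lambda>_. count_space {1,2,3}) I UNIV"
    and unif: "\<forall>n. \<forall>k\<in>{1,2,3}. measure M {\<omega> \<in> space M. I n \<omega> = k} = 1/3"
    and \<zeta>_meas: "\<zeta> \<in> measurable M Rbar_M"
    and \<zeta>_lim: "AE \<omega> in M. hbar_tendsto (zseq Ls z0 I \<omega>) (\<zeta> \<omega>)"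
  shows "\<forall>A \<in> sets Rbar_M.
           emeasure (distr M Rbar_M \<zeta>) A =
           (\<Sum>i\<in>{1,2,3}. emeasure (distr (distr M Rbar_M \<zeta>) Rbar_M (tau (Ls i) z0)) A) / 3"
proof -
  interpret uniform_iid_steps M I "{1, 2, 3}"
    by (rule uniform_iid_steps.intro[OF P], unfold_locales) (use indep unif in auto)
  define T where "T i = tau (Ls i) z0" for i
  have T: "hbar_continuous (T i) \<and> T i \<in> measurable Rbar_M Rbar_M" if "i \<in> {1, 2, 3}" for i
    using lines that by (auto simp: T_def intro: hbar_continuous_tau measurable_tau)
  have walk: "AE \<omega> in M. hbar_tendsto (\<lambda>m. foldr (\<lambda>k. T (I k \<omega>)) [0..<m] (Some z0)) (\<zeta> \<omega>)"
    using \<zeta>_lim by (simp add: zseq_def[abs_def] T_def)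
  have \<mu>: "Rbar_prob (distr M Rbar_M \<zeta>)" by (rule Rbar_prob_distr[OF P \<zeta>_meas])
  moreover have "Rbar_prob (distr (distr M Rbar_M \<zeta>) Rbar_M (T i))" for i
    using Rbar_prob.axioms(1)[OF \<mu>] by (rule Rbar_prob_distr) (simp add: T_def measurable_tau)
  ultimately have "emeasure (distr M Rbar_M \<zeta>) A =
      (\<Sum>i\<in>{1, 2, 3}. emeasure (distr (distr M Rbar_M \<zeta>) Rbar_M (T i)) A) / card {1, 2, 3 :: nat}"
    if "A \<in> sets Rbar_M" for A
    using that integral_law_eq_average[OF _ \<zeta>_meas walk T]
    by (intro emeasure_eq_average_if_integrals_eq) auto
  then show ?thesis by (simp add: T_def)
qed

end
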